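(* Let $E$ be a finite Galois extension of $\mathbb{Q}$ with Galois group $G$, with a fixed embedding $E\hookrightarrow\mathbb{C}$, and let $V$ be a finite-dimensional $E$-vector space. Let $W_\mathbb{Q}\subseteq V_\mathbb{Q}$ be any $\mathbb{Q}$-subspace of the underlying $\mathbb{Q}$-vector space of $V$, and let $W_\mathbb{C}=W_\mathbb{Q}\otimes_\mathbb{Q}\mathbb{C}\subseteq V_\mathbb{C}$. (i) If there exists $\sigma_0\in G$ with $P_{\sigma_0}(W_\mathbb{C})=V_{\sigma_0}$, then $P_\sigma(W_\mathbb{C})=V_\sigma$ for all $\sigma\in G$. (ii) If there exist $\sigma_0\neq\tau_0$ in $G$ with $P_{\sigma_0,\tau_0}(W_\mathbb{C})=V_{\sigma_0}\oplus V_{\tau_0}$, then $P_{\sigma,\tau}(W_\mathbb{C})=V_\sigma\oplus V_\tau$ for every pair $(\sigma,\tau)=(\kappa\sigma_0,\kappa\tau_0)$ with $\kappa\in G$.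
   Context: $V_\mathbb{C}=V\otimes_\mathbb{Q}\mathbb{C}$, on which $E$ acts via the first factor, making it a module over $E\otimes_\mathbb{Q}\mathbb{C}$. Identifying each $\sigma\in G$ with the embedding $E\xrightarrow{\sigma}E\subset\mathbb{C}$, one has $V_\mathbb{C}=\bigoplus_{\sigma\in G}V_\sigma$ where $V_\sigma=\{w\in V_\mathbb{C}: (e\otimes1)w=\sigma(e)w \text{ for all } e\in E\}$. $P_\sigma:V_\mathbb{C}\to V_\sigma$ is the $\mathbb{C}$-linear projection onto the summand $V_\sigma$, and for $\sigma\neq\tau$, $P_{\sigma,\tau}=P_\sigma\oplus P_\tau:V_\mathbb{C}\to V_\sigma\oplus V_\tau$. *)

theory Defs
  imports "HOL-Analysis.Analysis"
begin

text \<open>Number fields are modelled as subfields E of the complex numbers (this is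
the fixed embedding of E into C).\<close>

definition subfield_C :: "complex set \<Rightarrow> bool" where
  "subfield_C E \<longleftrightarrow> 0 \<in> E \<and> 1 \<in> E \<and> (\<forall>x\<in>E. \<forall>y\<in>E. x + y \<in> E \<and> x * y \<in> E)
     \<and> (\<forall>x\<in>E. - x \<in> E) \<and> (\<forall>x\<in>E. x \<noteq> 0 \<longrightarrow> inverse x \<in> E)"

definition finite_dim_over_Q :: "complex set \<Rightarrow> bool" where
  "finite_dim_over_Q E \<longleftrightarrow> (\<exists>B. finite B \<and> B \<subseteq> E \<and>
     (\<forall>x\<in>E. \<exists>c. (\<forall>b\<in>B. c b \<in> \<rat>) \<and> x = (\<Sum>b\<in>B. c b * b)))"

text \<open>Field embeddings E \<rightarrow> C (ring homomorphisms; they automatically fix Q),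
  made canonical by extending with 0 outside E.\<close>
definition embeddings :: "complex set \<Rightarrow> (complex \<Rightarrow> complex) set" where
  "embeddings E = {\<sigma>. (\<forall>x\<in>E. \<forall>y\<in>E. \<sigma> (x + y) = \<sigma> x + \<sigma> y \<and> \<sigma> (x * y) = \<sigma> x * \<sigma> y)
      \<and> \<sigma> 1 = 1 \<and> (\<forall>x. x \<notin> E \<longrightarrow> \<sigma> x = 0)}"

text \<open>Finite Galois extension of Q (char 0, so Galois = normal).\<close>
definition galois_over_Q :: "complex set \<Rightarrow> bool" where
  "galois_over_Q E \<longleftrightarrow> subfield_C E \<and> finite_dim_over_Q E \<and> (\<forall>\<sigma>\<in>embeddings E. \<sigma> ` E \<subseteq> E)"

definition Gal :: "complex set \<Rightarrow> (complex \<Rightarrow> complex) set" where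
  "Gal E = {\<sigma> \<in> embeddings E. \<sigma> ` E = E}"

text \<open>V = E^n (coordinates w.r.t. an E-basis).\<close>
definition Vspace :: "complex set \<Rightarrow> (complex ^ 'n) set" where
  "Vspace E = {v. \<forall>i. v $ i \<in> E}"

definition Q_subspace :: "complex set \<Rightarrow> (complex ^ 'n) set \<Rightarrow> bool" where
  "Q_subspace E W \<longleftrightarrow> W \<subseteq> Vspace E \<and> 0 \<in> W \<and> (\<forall>x\<in>W. \<forall>y\<in>W. x + y \<in> W)
     \<and> (\<forall>q\<in>\<rat>. \<forall>x\<in>W. q *s x \<in> W)"

text \<open>V_C = V \<otimes>_Q C, realised via the canonical isomorphism
  v \<otimes> z \<mapsto> (\<sigma> \<mapsto> z \<cdot> \<sigma>(v)) onto families indexed by G of vectors in C^n.\<close>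
definition VC :: "complex set \<Rightarrow> ((complex \<Rightarrow> complex) \<Rightarrow> complex ^ 'n) set" where
  "VC E = {f. \<forall>\<sigma>. \<sigma> \<notin> Gal E \<longrightarrow> f \<sigma> = 0}"

text \<open>Image of v \<otimes> 1.\<close>
definition iota :: "complex set \<Rightarrow> complex ^ 'n \<Rightarrow> (complex \<Rightarrow> complex) \<Rightarrow> complex ^ 'n" where
  "iota E v = (\<lambda>\<sigma>. if \<sigma> \<in> Gal E then (\<chi> i. \<sigma> (v $ i)) else 0)"

text \<open>W_C = W_Q \<otimes>_Q C inside V_C, i.e. the C-span of the image of W_Q.\<close>
definition WC :: "complex set \<Rightarrow> (complex ^ 'n) set \<Rightarrow> ((complex \<Rightarrow> complex) \<Rightarrow> complex ^ 'n) set" where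
  "WC E W = {f. \<exists>F c. finite F \<and> F \<subseteq> W \<and> f = (\<lambda>\<sigma>. \<Sum>w\<in>F. c w *s iota E w \<sigma>)}"

text \<open>Action of e \<in> E on V_C via the first tensor factor: e \<otimes> 1.\<close>
definition Eact :: "complex \<Rightarrow> ((complex \<Rightarrow> complex) \<Rightarrow> complex ^ 'n) \<Rightarrow> ((complex \<Rightarrow> complex) \<Rightarrow> complex ^ 'n)" where
  "Eact e f = (\<lambda>\<sigma>. \<sigma> e *s f \<sigma>)"

definition Vsig :: "complex set \<Rightarrow> (complex \<Rightarrow> complex) \<Rightarrow> ((complex \<Rightarrow> complex) \<Rightarrow> complex ^ 'n) set" where
  "Vsig E \<sigma> = {w \<in> VC E. \<forall>e\<in>E. Eact e w = (\<lambda>\<tau>. \<sigma> e *s w \<tau>)}"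

text \<open>Projection onto the summand V_sigma of V_C = (direct sum over G of V_sigma).\<close>
definition Psig :: "(complex \<Rightarrow> complex) \<Rightarrow> ((complex \<Rightarrow> complex) \<Rightarrow> complex ^ 'n) \<Rightarrow> ((complex \<Rightarrow> complex) \<Rightarrow> complex ^ 'n)" where
  "Psig \<sigma> f = (\<lambda>\<rho>. if \<rho> = \<sigma> then f \<rho> else 0)"

definition Ppair :: "(complex \<Rightarrow> complex) \<Rightarrow> (complex \<Rightarrow> complex) \<Rightarrow> ((complex \<Rightarrow> complex) \<Rightarrow> complex ^ 'n) \<Rightarrow> ((complex \<Rightarrow> complex) \<Rightarrow> complex ^ 'n)" where
  "Ppair \<sigma> \<tau> f = (\<lambda>\<rho>. if \<rho> = \<sigma> \<or> \<rho> = \<tau> then f \<rho> else 0)"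

definition Vsum :: "((complex \<Rightarrow> complex) \<Rightarrow> complex ^ 'n) set \<Rightarrow> ((complex \<Rightarrow> complex) \<Rightarrow> complex ^ 'n) set \<Rightarrow> ((complex \<Rightarrow> complex) \<Rightarrow> complex ^ 'n) set" where
  "Vsum A B = {(\<lambda>\<rho>. g \<rho> + h \<rho>) | g h. g \<in> A \<and> h \<in> B}"

end

theory Submission
  imports Defs
begin

text \<open>Fix a finite set T \<subseteq> G. The projection of W_C onto the sum of the V_\<rho>, \<rho> \<in> T, is onto
  iff every family (g \<rho>) of vectors in C^n indexed by \<rho> \<in> T is a C-linear combination of the
  conjugate families (\<rho> w), w \<in> W_Q. This is a linear system with coefficients in E, so for
  E-valued families it is already solvable with coefficients in E, and conversely the E-valued
  families span all families over C. Applying \<kappa> \<in> G to an E-linear relation for T gives one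
  for \<kappa> \<circ> T; this transports surjectivity from T to \<kappa> \<circ> T, and for (i) G acts transitively on
  itself.\<close>

subsection \<open>Subfields of C\<close>

context
  fixes E :: "complex set"
  assumes subfield: "subfield_C E"
begin

lemma subfield_C_0: "0 \<in> E"
  and subfield_C_1: "1 \<in> E"
  and subfield_C_add: "x \<in> E \<Longrightarrow> y \<in> E \<Longrightarrow> x + y \<in> E"
  and subfield_C_mult: "x \<in> E \<Longrightarrow> y \<in> E \<Longrightarrow> x * y \<in> E"
  and subfield_C_inverse: "x \<in> E \<Longrightarrow> inverse x \<in> E"
  using subfield unfolding subfield_C_def by (auto simp: inverse_eq_divide)

lemma subfield_C_diff: "x \<in> E \<Longrightarrow> y \<in> E \<Longrightarrow> x - y \<in> E"
  using subfield unfolding subfield_C_def by (metis diff_conv_add_uminus)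

lemma subfield_C_divide: "x \<in> E \<Longrightarrow> y \<in> E \<Longrightarrow> x / y \<in> E"
  by (simp add: divide_inverse subfield_C_inverse subfield_C_mult)

lemma subfield_C_sum: "(\<And>j. j \<in> J \<Longrightarrow> f j \<in> E) \<Longrightarrow> (\<Sum>j\<in>J. f j) \<in> E"
  by (induction J rule: infinite_finite_induct) (auto simp: subfield_C_0 subfield_C_add)

text \<open>Gaussian elimination on the first equation: solve for the pivot unknown j0 and
  substitute it into the remaining equations.\<close>

lemma subfield_C_linear_system_solution:
  assumes "finite R" "finite J"
    and "\<forall>j\<in>J. \<forall>r\<in>R. a j r \<in> E" "\<forall>r\<in>R. t r \<in> E"
    and "\<forall>r\<in>R. (\<Sum>j\<in>J. c j * a j r) = t r"
  shows "\<exists>d. (\<forall>j\<in>J. d j \<in> E) \<and> (\<forall>r\<in>R. (\<Sum>j\<in>J. d j * a j r) = t r)"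
  using assms(1,3-)
proof (induction R arbitrary: a t rule: finite_induct)
  case empty
  show ?case using subfield_C_0 by auto
next
  case (insert r0 R)
  show ?case
  proof (cases "\<forall>j\<in>J. a j r0 = 0")
    case True
    then show ?thesis using insert.IH[of a t] insert.prems by auto
  next
    case False
    then obtain j0 where j0: "j0 \<in> J" "a j0 r0 \<noteq> 0" by auto
    define p where "p = a j0 r0"
    have pE: "p \<in> E" using insert.prems(1) j0 by (auto simp: p_def)
    have eliminate: "(\<Sum>j\<in>J. x j * (a j r - a j r0 / p * a j0 r))
        = (\<Sum>j\<in>J. x j * a j r) - (\<Sum>j\<in>J. x j * a j r0) / p * a j0 r" for x r
    proof -
      have "(\<Sum>j\<in>J. x j * (a j r0 / p * a j0 r)) = (\<Sum>j\<in>J. x j * a j r0) / p * a j0 r"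
        by (simp add: sum_distrib_left sum_distrib_right divide_inverse mult_ac)
      then show ?thesis by (simp add: right_diff_distrib sum_subtractf)
    qed
    obtain d where dE: "\<forall>j\<in>J. d j \<in> E"
      and d: "\<forall>r\<in>R. (\<Sum>j\<in>J. d j * (a j r - a j r0 / p * a j0 r)) = t r - t r0 / p * a j0 r"
    proof -
      have "\<forall>j\<in>J. \<forall>r\<in>R. a j r - a j r0 / p * a j0 r \<in> E"
        using insert.prems(1) j0 pE by (auto intro!: subfield_C_diff subfield_C_mult subfield_C_divide)
      moreover have "\<forall>r\<in>R. t r - t r0 / p * a j0 r \<in> E"
        using insert.prems(1,2) j0 pE by (auto intro!: subfield_C_diff subfield_C_mult subfield_C_divide)
      moreover have "\<forall>r\<in>R. (\<Sum>j\<in>J. c j * (a j r - a j r0 / p * a j0 r)) = t r - t r0 / p * a j0 r"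
        unfolding eliminate using insert.prems(3) by simp
      ultimately show ?thesis
        using insert.IH[of "\<lambda>j r. a j r - a j r0 / p * a j0 r" "\<lambda>r. t r - t r0 / p * a j0 r"] that
        by blast
    qed
    define \<delta> where "\<delta> = (t r0 - (\<Sum>j\<in>J. d j * a j r0)) / p"
    define d' where "d' j = d j + (if j = j0 then \<delta> else 0)" for j
    have d'_sum: "(\<Sum>j\<in>J. d' j * a j r) = (\<Sum>j\<in>J. d j * a j r) + \<delta> * a j0 r" for r
    proof -
      have "(\<Sum>j\<in>J. d' j * a j r) = (\<Sum>j\<in>J. d j * a j r + (if j = j0 then \<delta> * a j r else 0))"
        by (intro sum.cong) (auto simp: d'_def distrib_right)
      then show ?thesis using j0 \<open>finite J\<close> by (simp add: sum.distrib)
    qed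
    have "\<delta> \<in> E"
      unfolding \<delta>_def using insert.prems(1,2) dE pE
      by (auto intro!: subfield_C_divide subfield_C_diff subfield_C_sum subfield_C_mult)
    then have "\<forall>j\<in>J. d' j \<in> E" using dE by (auto simp: d'_def subfield_C_add subfield_C_0)
    moreover have "(\<Sum>j\<in>J. d' j * a j r) = t r" if "r \<in> insert r0 R" for r
    proof (cases "r = r0")
      case True
      then show ?thesis using j0 by (simp add: d'_sum \<delta>_def p_def field_simps)
    next
      case False
      then have "(\<Sum>j\<in>J. d j * a j r) = t r - t r0 / p * a j0 r + (\<Sum>j\<in>J. d j * a j r0) / p * a j0 r"
        using d that eliminate[of d r] by auto
      then show ?thesis by (simp add: d'_sum \<delta>_def diff_divide_distrib algebra_simps)
    qed
    ultimately show ?thesis by blast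
  qed
qed

end

subsection \<open>Embeddings and the Galois group\<close>

lemma embedding_add: "\<rho> \<in> embeddings E \<Longrightarrow> x \<in> E \<Longrightarrow> y \<in> E \<Longrightarrow> \<rho> (x + y) = \<rho> x + \<rho> y"
  and embedding_mult: "\<rho> \<in> embeddings E \<Longrightarrow> x \<in> E \<Longrightarrow> y \<in> E \<Longrightarrow> \<rho> (x * y) = \<rho> x * \<rho> y"
  and embedding_1: "\<rho> \<in> embeddings E \<Longrightarrow> \<rho> 1 = 1"
  and embedding_outside: "\<rho> \<in> embeddings E \<Longrightarrow> x \<notin> E \<Longrightarrow> \<rho> x = 0"
  unfolding embeddings_def by auto

lemma embedding_0: "subfield_C E \<Longrightarrow> \<rho> \<in> embeddings E \<Longrightarrow> \<rho> 0 = 0"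
  using embedding_add[of \<rho> E 0 0] subfield_C_0[of E] by simp

lemma embedding_sum:
  assumes "subfield_C E" "\<rho> \<in> embeddings E" "\<And>j. j \<in> J \<Longrightarrow> f j \<in> E"
  shows "\<rho> (\<Sum>j\<in>J. f j) = (\<Sum>j\<in>J. \<rho> (f j))"
  using assms(3)
  by (induction J rule: infinite_finite_induct)
     (auto simp: embedding_0[OF assms(1,2)] embedding_add[OF assms(2)] subfield_C_sum[OF assms(1)])

lemma embedding_inj_on:
  assumes subfield: "subfield_C E" and emb: "\<rho> \<in> embeddings E"
  shows "inj_on \<rho> E"
proof (rule inj_onI, rule ccontr)
  fix x y assume x: "x \<in> E" and y: "y \<in> E" and eq: "\<rho> x = \<rho> y" and "x \<noteq> y"
  have xy: "x - y \<in> E" "inverse (x - y) \<in> E"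
    using x y by (simp_all add: subfield_C_diff subfield_C_inverse subfield)
  have "\<rho> x = \<rho> y + \<rho> (x - y)"
    using embedding_add[OF emb y xy(1)] by simp
  then have "\<rho> (x - y) = 0" using eq by simp
  then have "\<rho> ((x - y) * inverse (x - y)) = 0"
    using embedding_mult[OF emb xy] by simp
  then show False using \<open>x \<noteq> y\<close> embedding_1[OF emb] by simp
qed

lemma Gal_maps: "\<rho> \<in> Gal E \<Longrightarrow> x \<in> E \<Longrightarrow> \<rho> x \<in> E"
  unfolding Gal_def by auto

lemma Gal_comp:
  assumes subfield: "subfield_C E" and \<kappa>: "\<kappa> \<in> Gal E" and \<rho>: "\<rho> \<in> Gal E"
  shows "\<kappa> \<circ> \<rho> \<in> Gal E"
proof -
  have emb: "\<kappa> \<in> embeddings E" "\<rho> \<in> embeddings E" using \<kappa> \<rho> by (auto simp: Gal_def)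
  have "\<kappa> \<circ> \<rho> \<in> embeddings E"
    unfolding embeddings_def
  proof (intro CollectI conjI ballI allI impI)
    fix x y assume "x \<in> E" "y \<in> E"
    then show "(\<kappa> \<circ> \<rho>) (x + y) = (\<kappa> \<circ> \<rho>) x + (\<kappa> \<circ> \<rho>) y"
      and "(\<kappa> \<circ> \<rho>) (x * y) = (\<kappa> \<circ> \<rho>) x * (\<kappa> \<circ> \<rho>) y"
      by (simp_all add: embedding_add[OF emb(1)] embedding_add[OF emb(2)]
          embedding_mult[OF emb(1)] embedding_mult[OF emb(2)] Gal_maps[OF \<rho>])
  next
    show "(\<kappa> \<circ> \<rho>) 1 = 1" by (simp add: embedding_1[OF emb(1)] embedding_1[OF emb(2)])
  next
    fix x assume "x \<notin> E"
    then show "(\<kappa> \<circ> \<rho>) x = 0"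
      by (simp add: embedding_outside[OF emb(2)] embedding_0[OF subfield emb(1)])
  qed
  moreover have "(\<kappa> \<circ> \<rho>) ` E = E"
  proof -
    have "(\<kappa> \<circ> \<rho>) ` E = \<kappa> ` \<rho> ` E" by (simp only: image_comp)
    then show ?thesis using \<kappa> \<rho> by (simp add: Gal_def)
  qed
  ultimately show ?thesis by (simp add: Gal_def)
qed

lemma Gal_inverse:
  assumes subfield: "subfield_C E" and \<sigma>: "\<sigma> \<in> Gal E"
  obtains \<sigma>' where "\<sigma>' \<in> Gal E" "\<And>x. x \<in> E \<Longrightarrow> \<sigma>' (\<sigma> x) = x" "\<And>x. x \<in> E \<Longrightarrow> \<sigma> (\<sigma>' x) = x"
proof -
  have emb: "\<sigma> \<in> embeddings E" and onto: "\<sigma> ` E = E" using \<sigma> by (auto simp: Gal_def)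
  have inj: "inj_on \<sigma> E" by (rule embedding_inj_on[OF subfield emb])
  define \<sigma>' where "\<sigma>' x = (if x \<in> E then inv_into E \<sigma> x else 0)" for x
  have left: "\<sigma>' (\<sigma> x) = x" if "x \<in> E" for x
  proof -
    have "\<sigma> x \<in> E" using that onto by blast
    then show ?thesis using that inj by (simp add: \<sigma>'_def)
  qed
  have right: "\<sigma> (\<sigma>' x) = x" if "x \<in> E" for x
    using that onto by (simp add: \<sigma>'_def f_inv_into_f)
  have "\<sigma>' \<in> embeddings E"
    unfolding embeddings_def
  proof (intro CollectI conjI ballI allI impI)
    fix x y assume "x \<in> E" "y \<in> E"
    then have "x \<in> \<sigma> ` E" "y \<in> \<sigma> ` E" using onto by simp_all
    then obtain a b where ab: "a \<in> E" "b \<in> E" "x = \<sigma> a" "y = \<sigma> b" by blast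
    have "\<sigma>' (x + y) = \<sigma>' (\<sigma> (a + b))" using ab by (simp add: embedding_add[OF emb])
    then show "\<sigma>' (x + y) = \<sigma>' x + \<sigma>' y" using ab by (simp add: left subfield_C_add[OF subfield])
    have "\<sigma>' (x * y) = \<sigma>' (\<sigma> (a * b))" using ab by (simp add: embedding_mult[OF emb])
    then show "\<sigma>' (x * y) = \<sigma>' x * \<sigma>' y" using ab by (simp add: left subfield_C_mult[OF subfield])
  next
    show "\<sigma>' 1 = 1" using left[OF subfield_C_1[OF subfield]] by (simp add: embedding_1[OF emb])
  next
    fix x assume "x \<notin> E"
    then show "\<sigma>' x = 0" by (simp add: \<sigma>'_def)
  qed
  moreover have "\<sigma>' ` E = E"
  proof
    show "\<sigma>' ` E \<subseteq> E" using onto by (auto simp: \<sigma>'_def inv_into_into)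
    show "E \<subseteq> \<sigma>' ` E"
    proof
      fix a assume a: "a \<in> E"
      then have "\<sigma> a \<in> E" using onto by blast
      then show "a \<in> \<sigma>' ` E" using left[OF a] by (metis image_eqI)
    qed
  qed
  ultimately have "\<sigma>' \<in> Gal E" by (simp add: Gal_def)
  then show ?thesis using left right by (rule that)
qed

lemma Gal_transitive:
  assumes subfield: "subfield_C E" and "\<sigma>0 \<in> Gal E" "\<sigma> \<in> Gal E"
  obtains \<kappa> where "\<kappa> \<in> Gal E" "\<kappa> \<circ> \<sigma>0 = \<sigma>"
proof -
  obtain \<sigma>0' where \<sigma>0': "\<sigma>0' \<in> Gal E" "\<And>x. x \<in> E \<Longrightarrow> \<sigma>0' (\<sigma>0 x) = x"
    using Gal_inverse[OF subfield \<open>\<sigma>0 \<in> Gal E\<close>] by blast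
  have emb: "\<sigma>0 \<in> embeddings E" "\<sigma> \<in> embeddings E" "\<sigma>0' \<in> embeddings E"
    using assms \<sigma>0' by (auto simp: Gal_def)
  have "(\<sigma> \<circ> \<sigma>0') \<circ> \<sigma>0 = \<sigma>"
  proof
    fix x
    show "((\<sigma> \<circ> \<sigma>0') \<circ> \<sigma>0) x = \<sigma> x"
      by (cases "x \<in> E") (simp_all add: \<sigma>0'(2) embedding_outside[OF emb(1)] embedding_outside[OF emb(2)]
          embedding_0[OF subfield emb(2)] embedding_0[OF subfield emb(3)])
  qed
  then show ?thesis by (rule that[OF Gal_comp[OF subfield \<open>\<sigma> \<in> Gal E\<close> \<sigma>0'(1)]])
qed

subsection \<open>Spanning families of conjugates\<close>

definition conj_vec :: "(complex \<Rightarrow> complex) \<Rightarrow> complex ^ 'n \<Rightarrow> complex ^ 'n" where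
  "conj_vec \<rho> w = (\<chi> i. \<rho> (w $ i))"

definition in_conj_span :: "complex set \<Rightarrow> (complex ^ 'n) set \<Rightarrow> (complex \<Rightarrow> complex) set
    \<Rightarrow> ((complex \<Rightarrow> complex) \<Rightarrow> complex ^ 'n) \<Rightarrow> bool" where
  "in_conj_span K W T g \<longleftrightarrow> (\<exists>F c. finite F \<and> F \<subseteq> W \<and> (\<forall>w\<in>F. c w \<in> K)
     \<and> (\<forall>\<rho>\<in>T. g \<rho> = (\<Sum>w\<in>F. c w *s conj_vec \<rho> w)))"

text \<open>With K = UNIV this says that W_C maps onto the \<rho>-components, \<rho> \<in> T; with K = E it is
  the E-rational form of that statement.\<close>

definition conj_spans :: "complex set \<Rightarrow> (complex ^ 'n) set \<Rightarrow> (complex \<Rightarrow> complex) set \<Rightarrow> bool" where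
  "conj_spans K W T \<longleftrightarrow> (\<forall>g. (\<forall>\<rho>\<in>T. \<forall>i. g \<rho> $ i \<in> K) \<longrightarrow> in_conj_span K W T g)"

lemma conj_vec_comp: "conj_vec (\<kappa> \<circ> \<rho>) w = conj_vec \<kappa> (conj_vec \<rho> w)"
  by (simp add: conj_vec_def)

lemma conj_vec_Vspace: "\<rho> \<in> Gal E \<Longrightarrow> w \<in> Vspace E \<Longrightarrow> conj_vec \<rho> w \<in> Vspace E"
  by (simp add: Vspace_def conj_vec_def Gal_maps)

lemma conj_vec_sum:
  assumes "subfield_C E" "\<kappa> \<in> embeddings E" "\<forall>w\<in>F. c w \<in> E" "\<forall>w\<in>F. \<forall>i. v w $ i \<in> E"
  shows "conj_vec \<kappa> (\<Sum>w\<in>F. c w *s v w) = (\<Sum>w\<in>F. \<kappa> (c w) *s conj_vec \<kappa> (v w))"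
  using assms by (auto simp: conj_vec_def vec_eq_iff sum_component subfield_C_mult
      embedding_sum embedding_mult intro!: sum.cong)

lemma in_conj_span_mono: "in_conj_span K W T g \<Longrightarrow> K \<subseteq> K' \<Longrightarrow> in_conj_span K' W T g"
  unfolding in_conj_span_def by blast

lemma in_conj_span_cong: "in_conj_span K W T g \<Longrightarrow> (\<And>\<rho>. \<rho> \<in> T \<Longrightarrow> g \<rho> = h \<rho>) \<Longrightarrow> in_conj_span K W T h"
  unfolding in_conj_span_def by metis

lemma in_conj_span_scale:
  assumes "in_conj_span UNIV W T g"
  shows "in_conj_span UNIV W T (\<lambda>\<rho>. a *s g \<rho>)"
proof -
  obtain F c where "finite F" "F \<subseteq> W" "\<forall>\<rho>\<in>T. g \<rho> = (\<Sum>w\<in>F. c w *s conj_vec \<rho> w)"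
    using assms unfolding in_conj_span_def by blast
  then show ?thesis
    unfolding in_conj_span_def
    by (intro exI[of _ F] exI[of _ "\<lambda>w. a * c w"]) (auto simp: vec_eq_iff sum_distrib_left mult.assoc)
qed

lemma in_conj_span_add:
  assumes "in_conj_span UNIV W T g" "in_conj_span UNIV W T h"
  shows "in_conj_span UNIV W T (\<lambda>\<rho>. g \<rho> + h \<rho>)"
proof -
  obtain F c F' c' where F: "finite F" "F \<subseteq> W" "\<forall>\<rho>\<in>T. g \<rho> = (\<Sum>w\<in>F. c w *s conj_vec \<rho> w)"
    and F': "finite F'" "F' \<subseteq> W" "\<forall>\<rho>\<in>T. h \<rho> = (\<Sum>w\<in>F'. c' w *s conj_vec \<rho> w)"
    using assms unfolding in_conj_span_def by blast
  have extend: "(\<Sum>w\<in>F \<union> F'. (if w \<in> G then b w else 0) *s conj_vec \<rho> w) = (\<Sum>w\<in>G. b w *s conj_vec \<rho> w)"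
    if "G \<subseteq> F \<union> F'" for G b \<rho>
    using that F(1) F'(1) by (intro sum.mono_neutral_cong_right) auto
  show ?thesis
    unfolding in_conj_span_def
    using F F' extend[of F c] extend[of F' c']
    by (intro exI[of _ "F \<union> F'"] exI[of _ "\<lambda>w. (if w \<in> F then c w else 0) + (if w \<in> F' then c' w else 0)"])
       (simp add: vector_sadd_rdistrib sum.distrib)
qed

lemma in_conj_span_sum:
  "finite K \<Longrightarrow> (\<And>k. k \<in> K \<Longrightarrow> in_conj_span UNIV W T (G k)) \<Longrightarrow> in_conj_span UNIV W T (\<lambda>\<rho>. \<Sum>k\<in>K. G k \<rho>)"
proof (induction K rule: finite_induct)
  case empty
  show ?case unfolding in_conj_span_def by (intro exI[of _ "{}"]) auto
next
  case (insert x F)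
  then show ?case using in_conj_span_add[of W T "G x" "\<lambda>\<rho>. \<Sum>k\<in>F. G k \<rho>"] by simp
qed

text \<open>The unknowns are the coefficients c w, one equation for each (\<rho>, i) \<in> T \<times> UNIV;
  the equations have coefficients \<rho>(w $ i) \<in> E.\<close>

lemma conj_spans_UNIV_imp_subfield:
  fixes W :: "(complex ^ 'n) set"
  assumes subfield: "subfield_C E" and "W \<subseteq> Vspace E" "finite T" "T \<subseteq> Gal E"
    and spans: "conj_spans UNIV W T"
  shows "conj_spans E W T"
  unfolding conj_spans_def
proof (intro allI impI)
  fix g :: "(complex \<Rightarrow> complex) \<Rightarrow> complex ^ 'n"
  assume gE: "\<forall>\<rho>\<in>T. \<forall>i. g \<rho> $ i \<in> E"
  have "in_conj_span UNIV W T g" using spans by (simp add: conj_spans_def)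
  then obtain F c where F: "finite F" "F \<subseteq> W" "\<forall>\<rho>\<in>T. g \<rho> = (\<Sum>w\<in>F. c w *s conj_vec \<rho> w)"
    unfolding in_conj_span_def by blast
  have "conj_vec \<rho> w \<in> Vspace E" if "w \<in> F" "\<rho> \<in> T" for w \<rho>
    using conj_vec_Vspace assms(2,4) F(2) that by blast
  then have aE: "\<forall>w\<in>F. \<forall>r\<in>T \<times> UNIV. conj_vec (fst r) w $ snd r \<in> E"
    by (auto simp: Vspace_def)
  have tE: "\<forall>r\<in>T \<times> UNIV. g (fst r) $ snd r \<in> E" using gE by auto
  have eq: "\<forall>r\<in>T \<times> UNIV. (\<Sum>w\<in>F. c w * conj_vec (fst r) w $ snd r) = g (fst r) $ snd r"
    using F(3) by (auto simp: sum_component)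
  have "finite (T \<times> (UNIV :: 'n set))" using \<open>finite T\<close> by simp
  from subfield_C_linear_system_solution[OF subfield this F(1) aE tE eq]
  obtain d where "\<forall>w\<in>F. d w \<in> E"
    and "\<forall>r\<in>T \<times> UNIV. (\<Sum>w\<in>F. d w * conj_vec (fst r) w $ snd r) = g (fst r) $ snd r"
    by blast
  then show "in_conj_span E W T g"
    unfolding in_conj_span_def using F(1,2)
    by (intro exI[of _ F] exI[of _ d]) (auto simp: vec_eq_iff sum_component)
qed

text \<open>Every family is a C-combination of the E-valued families supported on one (\<rho>, i).\<close>

lemma conj_spans_subfield_imp_UNIV:
  fixes W :: "(complex ^ 'n) set"
  assumes subfield: "subfield_C E" and "finite T" and spans: "conj_spans E W T"
  shows "conj_spans UNIV W T"
  unfolding conj_spans_def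
proof (intro allI impI)
  fix g :: "(complex \<Rightarrow> complex) \<Rightarrow> complex ^ 'n"
  define unit :: "(complex \<Rightarrow> complex) \<times> 'n \<Rightarrow> (complex \<Rightarrow> complex) \<Rightarrow> complex ^ 'n"
    where "unit k \<rho> = (if \<rho> = fst k then axis (snd k) 1 else 0)" for k \<rho>
  have "in_conj_span E W T (unit k)" for k
    using spans subfield_C_0[OF subfield] subfield_C_1[OF subfield]
    by (auto simp: conj_spans_def unit_def axis_def)
  then have "in_conj_span UNIV W T (\<lambda>\<rho>. \<Sum>k\<in>T \<times> UNIV. g (fst k) $ snd k *s unit k \<rho>)"
    using \<open>finite T\<close> by (intro in_conj_span_sum in_conj_span_scale) (auto intro: in_conj_span_mono)
  moreover have "(\<Sum>k\<in>T \<times> UNIV. g (fst k) $ snd k *s unit k \<rho>) = g \<rho>" if "\<rho> \<in> T" for \<rho>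
  proof -
    have "(\<Sum>k\<in>T \<times> UNIV. g (fst k) $ snd k *s unit k \<rho>) $ j = (\<Sum>k\<in>T \<times> UNIV. if k = (\<rho>, j) then g \<rho> $ j else 0)" for j
      unfolding sum_component by (intro sum.cong) (auto simp: unit_def axis_def)
    then show ?thesis using that \<open>finite T\<close> by (simp add: vec_eq_iff)
  qed
  ultimately show "in_conj_span UNIV W T g" by (rule in_conj_span_cong)
qed

lemma conj_spans_Gal_image:
  fixes W :: "(complex ^ 'n) set"
  assumes subfield: "subfield_C E" and W: "W \<subseteq> Vspace E" and T: "T \<subseteq> Gal E" and \<kappa>: "\<kappa> \<in> Gal E"
    and spans: "conj_spans E W T"
  shows "conj_spans E W ((\<circ>) \<kappa> ` T)"
  unfolding conj_spans_def
proof (intro allI impI)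
  fix g :: "(complex \<Rightarrow> complex) \<Rightarrow> complex ^ 'n"
  assume "\<forall>\<rho>\<in>(\<circ>) \<kappa> ` T. \<forall>i. g \<rho> $ i \<in> E"
  then have gE: "g (\<kappa> \<circ> \<rho>) $ i \<in> E" if "\<rho> \<in> T" for \<rho> i using that by blast
  obtain \<kappa>' where \<kappa>': "\<kappa>' \<in> Gal E" "\<And>x. x \<in> E \<Longrightarrow> \<kappa> (\<kappa>' x) = x"
    using Gal_inverse[OF subfield \<kappa>] by blast
  have \<kappa>_emb: "\<kappa> \<in> embeddings E" using \<kappa> by (simp add: Gal_def)
  define h where "h \<rho> = conj_vec \<kappa>' (g (\<kappa> \<circ> \<rho>))" for \<rho>
  have h: "conj_vec \<kappa> (h \<rho>) = g (\<kappa> \<circ> \<rho>)" if "\<rho> \<in> T" for \<rho>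
    using gE[OF that] \<kappa>'(2) by (simp add: h_def conj_vec_def vec_eq_iff)
  have "\<forall>\<rho>\<in>T. \<forall>i. h \<rho> $ i \<in> E" using gE Gal_maps[OF \<kappa>'(1)] by (simp add: h_def conj_vec_def)
  then have "in_conj_span E W T h" using spans by (simp add: conj_spans_def)
  then obtain F d where F: "finite F" "F \<subseteq> W" "\<forall>w\<in>F. d w \<in> E"
      "\<forall>\<rho>\<in>T. h \<rho> = (\<Sum>w\<in>F. d w *s conj_vec \<rho> w)"
    unfolding in_conj_span_def by blast
  have "g (\<kappa> \<circ> \<rho>) = (\<Sum>w\<in>F. \<kappa> (d w) *s conj_vec (\<kappa> \<circ> \<rho>) w)" if "\<rho> \<in> T" for \<rho>
  proof -
    have "conj_vec \<rho> w \<in> Vspace E" if "w \<in> F" for w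
      using conj_vec_Vspace[of \<rho> E w] T W F(2) \<open>\<rho> \<in> T\<close> that by blast
    then have "\<forall>w\<in>F. \<forall>i. conj_vec \<rho> w $ i \<in> E" by (simp add: Vspace_def)
    from conj_vec_sum[OF subfield \<kappa>_emb F(3) this]
    show ?thesis using h[OF that] F(4) that by (simp add: conj_vec_comp)
  qed
  then show "in_conj_span E W ((\<circ>) \<kappa> ` T) g"
    unfolding in_conj_span_def using F(1-3) Gal_maps[OF \<kappa>]
    by (intro exI[of _ F] exI[of _ "\<kappa> \<circ> d"]) auto
qed

subsection \<open>Projections of W_C\<close>

definition proj_onto :: "(complex \<Rightarrow> complex) set \<Rightarrow> ((complex \<Rightarrow> complex) \<Rightarrow> complex ^ 'n)
    \<Rightarrow> ((complex \<Rightarrow> complex) \<Rightarrow> complex ^ 'n)" where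
  "proj_onto T f = (\<lambda>\<rho>. if \<rho> \<in> T then f \<rho> else 0)"

definition supported_on :: "(complex \<Rightarrow> complex) set \<Rightarrow> ((complex \<Rightarrow> complex) \<Rightarrow> complex ^ 'n) set" where
  "supported_on T = {g. \<forall>\<rho>. \<rho> \<notin> T \<longrightarrow> g \<rho> = 0}"

lemma Psig_eq_proj_onto: "Psig \<sigma> = proj_onto {\<sigma>}"
  by (simp add: fun_eq_iff Psig_def proj_onto_def)

lemma Ppair_eq_proj_onto: "Ppair \<sigma> \<tau> = proj_onto {\<sigma>, \<tau>}"
  by (simp add: fun_eq_iff Ppair_def proj_onto_def)

text \<open>Distinct \<rho>, \<sigma> \<in> G differ at some e \<in> E, and e acts on the \<rho>-component by both \<rho> e and \<sigma> e.\<close>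

lemma Vsig_eq_supported_on:
  assumes \<sigma>: "\<sigma> \<in> Gal E"
  shows "Vsig E \<sigma> = supported_on {\<sigma>}"
proof (intro equalityI subsetI)
  fix g :: "(complex \<Rightarrow> complex) \<Rightarrow> complex ^ 'n" assume g: "g \<in> Vsig E \<sigma>"
  have "g \<rho> = 0" if "\<rho> \<noteq> \<sigma>" for \<rho>
  proof (cases "\<rho> \<in> Gal E")
    case False
    then show ?thesis using g by (simp add: Vsig_def VC_def)
  next
    case True
    obtain x where x: "\<rho> x \<noteq> \<sigma> x" using \<open>\<rho> \<noteq> \<sigma>\<close> by (metis ext)
    have "x \<in> E"
    proof (rule ccontr)
      assume "x \<notin> E"
      then show False
        using x True \<sigma> embedding_outside[of \<rho> E x] embedding_outside[of \<sigma> E x] by (simp add: Gal_def)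
    qed
    then have "Eact x g = (\<lambda>\<tau>. \<sigma> x *s g \<tau>)" using g by (simp add: Vsig_def)
    then have "\<rho> x *s g \<rho> = \<sigma> x *s g \<rho>" by (metis Eact_def)
    then show ?thesis using x by simp
  qed
  then show "g \<in> supported_on {\<sigma>}" by (simp add: supported_on_def)
next
  fix g :: "(complex \<Rightarrow> complex) \<Rightarrow> complex ^ 'n" assume "g \<in> supported_on {\<sigma>}"
  then have g: "g \<rho> = 0" if "\<rho> \<noteq> \<sigma>" for \<rho> using that by (simp add: supported_on_def)
  have "g \<in> VC E" using \<sigma> by (auto simp: VC_def intro!: g)
  moreover have "Eact e g = (\<lambda>\<tau>. \<sigma> e *s g \<tau>)" for e
  proof
    fix \<tau>
    show "Eact e g \<tau> = \<sigma> e *s g \<tau>" by (cases "\<tau> = \<sigma>") (simp_all add: Eact_def g)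
  qed
  ultimately show "g \<in> Vsig E \<sigma>" by (simp add: Vsig_def)
qed

lemma Vsum_supported_on: "Vsum (supported_on S) (supported_on T) = supported_on (S \<union> T)"
proof (intro equalityI subsetI)
  fix g :: "(complex \<Rightarrow> complex) \<Rightarrow> complex ^ 'n" assume "g \<in> Vsum (supported_on S) (supported_on T)"
  then obtain a b where "g = (\<lambda>\<rho>. a \<rho> + b \<rho>)" "a \<in> supported_on S" "b \<in> supported_on T"
    unfolding Vsum_def by blast
  then show "g \<in> supported_on (S \<union> T)" by (simp add: supported_on_def)
next
  fix g :: "(complex \<Rightarrow> complex) \<Rightarrow> complex ^ 'n" assume g: "g \<in> supported_on (S \<union> T)"
  have "g = (\<lambda>\<rho>. proj_onto S g \<rho> + proj_onto (T - S) g \<rho>)"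
    using g by (auto simp: fun_eq_iff proj_onto_def supported_on_def)
  moreover have "proj_onto S g \<in> supported_on S" "proj_onto (T - S) g \<in> supported_on T"
    by (simp_all add: proj_onto_def supported_on_def)
  ultimately show "g \<in> Vsum (supported_on S) (supported_on T)"
    unfolding Vsum_def by blast
qed

lemma conj_spans_UNIV_iff: "conj_spans UNIV W T \<longleftrightarrow> (\<forall>g\<in>supported_on T. in_conj_span UNIV W T g)"
proof
  assume "\<forall>g\<in>supported_on T. in_conj_span UNIV W T g"
  then have "in_conj_span UNIV W T (proj_onto T g)" for g by (simp add: proj_onto_def supported_on_def)
  then have "in_conj_span UNIV W T g" for g by (rule in_conj_span_cong) (simp add: proj_onto_def)
  then show "conj_spans UNIV W T" by (simp add: conj_spans_def)
qed (simp add: conj_spans_def)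

lemma proj_onto_WC_iff:
  fixes W :: "(complex ^ 'n) set"
  assumes "T \<subseteq> Gal E"
  shows "g \<in> proj_onto T ` WC E W \<longleftrightarrow> g \<in> supported_on T \<and> in_conj_span UNIV W T g"
proof -
  have proj: "proj_onto T (\<lambda>\<rho>. \<Sum>w\<in>F. c w *s iota E w \<rho>) \<rho>
      = (if \<rho> \<in> T then \<Sum>w\<in>F. c w *s conj_vec \<rho> w else 0)" for F c \<rho>
    using assms by (auto simp: proj_onto_def iota_def conj_vec_def)
  show ?thesis
  proof
    assume "g \<in> proj_onto T ` WC E W"
    then obtain F c where F: "finite F" "F \<subseteq> W"
      and g: "g = proj_onto T (\<lambda>\<rho>. \<Sum>w\<in>F. c w *s iota E w \<rho>)"
      unfolding WC_def by blast
    have "g \<in> supported_on T" using g by (simp add: supported_on_def proj)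
    moreover have "in_conj_span UNIV W T g"
      unfolding in_conj_span_def using F g by (intro exI[of _ F] exI[of _ c]) (simp add: proj)
    ultimately show "g \<in> supported_on T \<and> in_conj_span UNIV W T g" ..
  next
    assume "g \<in> supported_on T \<and> in_conj_span UNIV W T g"
    then have supp: "\<And>\<rho>. \<rho> \<notin> T \<Longrightarrow> g \<rho> = 0" and "in_conj_span UNIV W T g"
      by (simp_all add: supported_on_def)
    then obtain F c where F: "finite F" "F \<subseteq> W" "\<forall>\<rho>\<in>T. g \<rho> = (\<Sum>w\<in>F. c w *s conj_vec \<rho> w)"
      unfolding in_conj_span_def by blast
    have "g = proj_onto T (\<lambda>\<rho>. \<Sum>w\<in>F. c w *s iota E w \<rho>)"
      using supp F(3) by (auto simp: fun_eq_iff proj)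
    moreover have "(\<lambda>\<rho>. \<Sum>w\<in>F. c w *s iota E w \<rho>) \<in> WC E W" using F(1,2) unfolding WC_def by blast
    ultimately show "g \<in> proj_onto T ` WC E W" by blast
  qed
qed

lemma proj_onto_WC_eq_iff_conj_spans:
  fixes W :: "(complex ^ 'n) set"
  assumes "T \<subseteq> Gal E"
  shows "proj_onto T ` WC E W = supported_on T \<longleftrightarrow> conj_spans UNIV W T"
proof -
  have "proj_onto T ` WC E W = {g \<in> supported_on T. in_conj_span UNIV W T g}"
    using proj_onto_WC_iff[OF assms] by blast
  then show ?thesis unfolding conj_spans_UNIV_iff by blast
qed

lemma proj_onto_WC_Gal_image:
  fixes W :: "(complex ^ 'n) set"
  assumes subfield: "subfield_C E" and "W \<subseteq> Vspace E" "finite T" "T \<subseteq> Gal E" "\<kappa> \<in> Gal E"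
    and "proj_onto T ` WC E W = supported_on T"
  shows "proj_onto ((\<circ>) \<kappa> ` T) ` WC E W = supported_on ((\<circ>) \<kappa> ` T)"
proof -
  have "conj_spans E W T"
    using assms conj_spans_UNIV_imp_subfield proj_onto_WC_eq_iff_conj_spans by blast
  then have "conj_spans E W ((\<circ>) \<kappa> ` T)"
    using conj_spans_Gal_image assms by blast
  then have "conj_spans UNIV W ((\<circ>) \<kappa> ` T)"
    using conj_spans_subfield_imp_UNIV assms by blast
  moreover have "(\<circ>) \<kappa> ` T \<subseteq> Gal E" using assms Gal_comp by blast
  ultimately show ?thesis using proj_onto_WC_eq_iff_conj_spans by blast
qed

theorem lemma2p1:
  fixes E :: "complex set" and W :: "(complex ^ 'n) set"
  assumes "galois_over_Q E" and "Q_subspace E W"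
  shows "((\<exists>\<sigma>0\<in>Gal E. Psig \<sigma>0 ` WC E W = Vsig E \<sigma>0)
           \<longrightarrow> (\<forall>\<sigma>\<in>Gal E. Psig \<sigma> ` WC E W = Vsig E \<sigma>))
       \<and> (\<forall>\<sigma>0\<in>Gal E. \<forall>\<tau>0\<in>Gal E. \<sigma>0 \<noteq> \<tau>0 \<longrightarrow>
            Ppair \<sigma>0 \<tau>0 ` WC E W = Vsum (Vsig E \<sigma>0) (Vsig E \<tau>0) \<longrightarrow>
            (\<forall>\<kappa>\<in>Gal E. Ppair (\<kappa> \<circ> \<sigma>0) (\<kappa> \<circ> \<tau>0) ` WC E W
                          = Vsum (Vsig E (\<kappa> \<circ> \<sigma>0)) (Vsig E (\<kappa> \<circ> \<tau>0))))"
proof -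
  have subfield: "subfield_C E" using assms(1) by (simp add: galois_over_Q_def)
  have WV: "W \<subseteq> Vspace E" using assms(2) by (simp add: Q_subspace_def)
  note transfer = proj_onto_WC_Gal_image[OF subfield WV]
  show ?thesis
  proof (intro conjI impI ballI)
    fix \<sigma> assume ex: "\<exists>\<sigma>0\<in>Gal E. Psig \<sigma>0 ` WC E W = Vsig E \<sigma>0" and \<sigma>: "\<sigma> \<in> Gal E"
    from ex obtain \<sigma>0 where \<sigma>0: "\<sigma>0 \<in> Gal E" and hyp: "Psig \<sigma>0 ` WC E W = Vsig E \<sigma>0" by (rule bexE)
    obtain \<kappa> where \<kappa>: "\<kappa> \<in> Gal E" "\<kappa> \<circ> \<sigma>0 = \<sigma>" by (rule Gal_transitive[OF subfield \<sigma>0 \<sigma>])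
    have "proj_onto {\<sigma>0} ` WC E W = supported_on {\<sigma>0}"
      using hyp \<sigma>0 by (simp add: Psig_eq_proj_onto Vsig_eq_supported_on)
    from transfer[OF _ _ \<kappa>(1) this] have "proj_onto {\<sigma>} ` WC E W = supported_on {\<sigma>}"
      using \<sigma>0 \<kappa>(2) by simp
    then show "Psig \<sigma> ` WC E W = Vsig E \<sigma>"
      using \<sigma> by (simp add: Psig_eq_proj_onto Vsig_eq_supported_on)
  next
    fix \<sigma>0 \<tau>0 \<kappa> assume \<sigma>0: "\<sigma>0 \<in> Gal E" and \<tau>0: "\<tau>0 \<in> Gal E" and \<kappa>: "\<kappa> \<in> Gal E"
      and hyp: "Ppair \<sigma>0 \<tau>0 ` WC E W = Vsum (Vsig E \<sigma>0) (Vsig E \<tau>0)"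
    have "proj_onto {\<sigma>0, \<tau>0} ` WC E W = supported_on {\<sigma>0, \<tau>0}"
      using hyp \<sigma>0 \<tau>0 by (simp add: Ppair_eq_proj_onto Vsig_eq_supported_on Vsum_supported_on insert_commute)
    from transfer[OF _ _ \<kappa> this]
    have "proj_onto {\<kappa> \<circ> \<sigma>0, \<kappa> \<circ> \<tau>0} ` WC E W = supported_on {\<kappa> \<circ> \<sigma>0, \<kappa> \<circ> \<tau>0}"
      using \<sigma>0 \<tau>0 by simp
    moreover have "\<kappa> \<circ> \<sigma>0 \<in> Gal E" "\<kappa> \<circ> \<tau>0 \<in> Gal E"
      using Gal_comp[OF subfield \<kappa>] \<sigma>0 \<tau>0 by blast+
    ultimately show "Ppair (\<kappa> \<circ> \<sigma>0) (\<kappa> \<circ> \<tau>0) ` WC E W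
        = Vsum (Vsig E (\<kappa> \<circ> \<sigma>0)) (Vsig E (\<kappa> \<circ> \<tau>0))"
      by (simp add: Ppair_eq_proj_onto Vsig_eq_supported_on Vsum_supported_on insert_commute)
  qed
qed

end
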